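(* Assume the L-smoothness assumption and the $\mu$-convexity assumption (with some $\mu\ge 0$) hold, let $x^\star$ be a minimizer of $f$, and assume $\sigma_f^2<\infty$. Let $c>0$ and $\gamma_b>0$ be the FedSPS parameters and set $\alpha:=\min\{\frac{1}{2cL},\gamma_b\}$. (a) (Convex case.) If $c\ge 2\tau^2$, then for every $T\ge1$ the iterates of FedSPS satisfy $$\frac{1}{Tn}\sum_{t=0}^{T-1}\sum_{i=1}^n \mathbb E\big[f_i(x_t^i)-f_i(x^\star)\big]\;\le\;\frac{2}{T\alpha}\|\bar x_0-x^\star\|^2+\frac{4\gamma_b\sigma_f^2}{\alpha}.$$ (b) (Strongly convex case.) If $\mu>0$ and $c\ge 4\tau^2$, then for every $T\ge1$ $$\mathbb E\|\bar x_T-x^\star\|^2\;\le\;\frac{1}{\mu\alpha}(1-\mu\alpha)^T\|\bar x_0-x^\star\|^2+\frac{2\gamma_b\sigma_f^2}{\alpha\mu}.$$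
   Context: Setting: integers $n\ge1$ (clients), $d\ge1$, $\tau\ge1$ (number of local steps between communications). For each client $i\in[n]$, $\mathcal D_i$ is a probability distribution on a set $\Omega_i$ and $F_i:\mathbb R^d\times\Omega_i\to\mathbb R$ is such that $F_i(\cdot,\xi)$ is differentiable for each $\xi\in\operatorname{supp}(\mathcal D_i)$; $f_i(x):=\mathbb E_{\xi\sim\mathcal D_i}F_i(x,\xi)$ with $\mathbb E_{\xi\sim\mathcal D_i}\nabla F_i(x,\xi)=\nabla f_i(x)$, and $f:=\frac1n\sum_{i=1}^n f_i$. Let $F_i^\star:=\inf_{\xi\in\operatorname{supp}(\mathcal D_i),\,x\in\mathbb R^d}F_i(x,\xi)$ and let $\ell_i^\star$ be given real numbers with $\ell_i^\star\le F_i^\star$. FedSPS with parameters $c>0$, $\gamma_b>0$: start from $x_0^i=x_0$ for all $i$. At each iteration $t=0,1,2,\dots$, each client $i$ draws $\xi_t^i\sim\mathcal D_i$ independently of everything else, computes $g_t^i:=\nabla F_i(x_t^i,\xi_t^i)$ and the stepsize $\gamma_t^i:=\min\{\frac{F_i(x_t^i,\xi_t^i)-\ell_i^\star}{c\|g_t^i\|^2},\gamma_b\}$ (the first term is read as $+\infty$ if $g_t^i=0$). If $t+1$ is a multiple of $\tau$, then $x_{t+1}^i:=\frac1n\sum_{j=1}^n(x_t^j-\gamma_t^jg_t^j)$ for every $i$; otherwise $x_{t+1}^i:=x_t^i-\gamma_t^ig_t^i$. Define $\bar x_t:=\frac1n\sum_{i=1}^n x_t^i$. Expectations are over all sampled $\xi_t^i$.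 L-smoothness assumption: there is $L\ge0$ with $\|\nabla F_i(y,\xi)-\nabla F_i(x,\xi)\|\le L\|x-y\|$ for all $i$, all $\xi\in\operatorname{supp}(\mathcal D_i)$, all $x,y$. $\mu$-convexity assumption: for all $i$, $\xi\in\operatorname{supp}(\mathcal D_i)$, $x,y$: $F_i(y,\xi)\ge F_i(x,\xi)+\langle\nabla F_i(x,\xi),y-x\rangle+\frac\mu2\|y-x\|^2$. With $x^\star$ a minimizer of $f$ and $f^\star=f(x^\star)$, the finite optimal objective difference is $\sigma_f^2:=\frac1n\sum_{i=1}^n(f_i(x^\star)-\ell_i^\star)$. *)

theory Defs
  imports "HOL-Probability.Probability"
begin

definition loc_obj :: "(nat \<Rightarrow> 'v \<Rightarrow> 'a \<Rightarrow> real) \<Rightarrow> (nat \<Rightarrow> 'a measure) \<Rightarrow> nat \<Rightarrow> 'v \<Rightarrow> real" where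
  "loc_obj F D i x = (\<integral>\<xi>. F i x \<xi> \<partial>D i)"

definition glob_obj :: "(nat \<Rightarrow> 'v \<Rightarrow> 'a \<Rightarrow> real) \<Rightarrow> (nat \<Rightarrow> 'a measure) \<Rightarrow> nat \<Rightarrow> 'v \<Rightarrow> real" where
  "glob_obj F D n x = (\<Sum>i<n. loc_obj F D i x) / real n"

text \<open>Stochastic Polyak stepsize of FedSPS: min{(F - l)/(c ||g||^2), gamma_b},
  the first term read as +infinity when g = 0.\<close>
definition sps_step :: "real \<Rightarrow> real \<Rightarrow> real \<Rightarrow> real \<Rightarrow> 'v::real_normed_vector \<Rightarrow> real" where
  "sps_step c gb Fval l g = (if g = 0 then gb else min ((Fval - l) / (c * (norm g)\<^sup>2)) gb)"

text \<open>FedSPS iterates.  The sample path is w :: nat \<times> nat \<Rightarrow> 'a, with w (t, i) = xi_t^i.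
  fedsps ... w t i = x_t^i.\<close>
fun fedsps :: "(nat \<Rightarrow> 'v::real_normed_vector \<Rightarrow> 'a \<Rightarrow> real) \<Rightarrow> (nat \<Rightarrow> 'v \<Rightarrow> 'a \<Rightarrow> 'v) \<Rightarrow>
    (nat \<Rightarrow> real) \<Rightarrow> real \<Rightarrow> real \<Rightarrow> nat \<Rightarrow> nat \<Rightarrow> 'v \<Rightarrow> (nat \<times> nat \<Rightarrow> 'a) \<Rightarrow> nat \<Rightarrow> nat \<Rightarrow> 'v" where
  "fedsps F G l c gb tau n x0 w 0 = (\<lambda>i. x0)"
| "fedsps F G l c gb tau n x0 w (Suc t) =
     (let x = fedsps F G l c gb tau n x0 w t;
          upd = (\<lambda>j. x j - sps_step c gb (F j (x j) (w (t, j))) (l j) (G j (x j) (w (t, j)))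
                              *\<^sub>R G j (x j) (w (t, j)))
      in if tau dvd Suc t then (\<lambda>i. (1 / real n) *\<^sub>R (\<Sum>j<n. upd j)) else upd)"

definition fedsps_avg where
  "fedsps_avg F G l c gb tau n x0 w t = (1 / real n) *\<^sub>R (\<Sum>i<n. fedsps F G l c gb tau n x0 w t i)"

definition sample_space :: "(nat \<Rightarrow> 'a measure) \<Rightarrow> nat \<Rightarrow> nat \<Rightarrow> (nat \<times> nat \<Rightarrow> 'a) measure" where
  "sample_space D n T = PiM ({..<T} \<times> {..<n}) (\<lambda>(t, i). D i)"

end

theory Submission
  imports Defs
begin

text \<open>
  Along every sample path each FedSPS stepsize gamma lies in [alpha, gb], and L-smoothness bounds
  ||g||^2 by 2L (F - l), so that gamma ||g||^2 <= (F - l) / c. Write e_t = ||xbar_t - x*||^2, let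
  A_t and B_t be the client averages of gamma (F(x_t^i) - l_i) and F(x*) - l_i, and let R_t be the
  mean squared distance of the clients from their average. Convexity of the sampled functions
  gives e_(t+1) <= (1 - mu alpha) e_t - A_t + 2 gb B_t + R_t. The clients were averaged at most
  tau steps ago, so R_t <= (tau / c) times the sum of the A_k since then. Summing the recursion with
  weights 1 (convex case) or (1 - mu alpha)^(T-1-t) (strongly convex case, where tau mu alpha <= 1/2
  keeps the weights within a factor 2 across a window), the drift is absorbed by half of the -A_t
  once c >= 2 tau^2, resp. c >= 4 tau^2. In expectation B_t has mean sigma_f^2, and since x_t^i does
  not depend on xi_t^i, F_i(x_t^i, xi_t^i) has the same mean as f_i(x_t^i); together with
  alpha (F - l) <= gamma (F - l) this yields both bounds.
\<close>

section \<open>Smooth functions and the Polyak stepsize\<close>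

lemma lipschitz_gradient_upper_bound:
  fixes f :: "'v::real_inner \<Rightarrow> real" and g :: "'v \<Rightarrow> 'v"
  assumes der: "\<And>x. (f has_derivative (\<lambda>h. g x \<bullet> h)) (at x)"
    and lip: "\<And>x y. norm (g y - g x) \<le> L * norm (x - y)"
  shows "f y \<le> f x + g x \<bullet> (y - x) + L / 2 * (norm (y - x))\<^sup>2"
proof -
  define v where "v = y - x"
  define \<phi> where "\<phi> s = f (x + s *\<^sub>R v) - s * (g x \<bullet> v) - L / 2 * s\<^sup>2 * (norm v)\<^sup>2" for s :: real
  have "\<phi> 1 \<le> \<phi> 0"
  proof (rule DERIV_nonpos_imp_nonincreasing[of 0 1 \<phi>])
    fix s :: real assume s: "0 \<le> s" "s \<le> 1"
    have "((\<lambda>s. f (x + s *\<^sub>R v)) has_derivative (\<lambda>h. g (x + s *\<^sub>R v) \<bullet> (h *\<^sub>R v))) (at s)"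
      by (rule has_derivative_compose[OF _ der]) (auto intro!: derivative_eq_intros)
    then have "(\<phi> has_derivative
        (\<lambda>h. g (x + s *\<^sub>R v) \<bullet> (h *\<^sub>R v) - h * (g x \<bullet> v) - L / 2 * (2 * s * h) * (norm v)\<^sup>2)) (at s)"
      unfolding \<phi>_def by (auto intro!: derivative_eq_intros simp: fun_eq_iff algebra_simps)
    then have "DERIV \<phi> s :> (g (x + s *\<^sub>R v) - g x) \<bullet> v - L * s * (norm v)\<^sup>2"
      unfolding has_field_derivative_def
      by (rule has_derivative_eq_rhs) (simp add: fun_eq_iff algebra_simps inner_diff_left)
    moreover have "(g (x + s *\<^sub>R v) - g x) \<bullet> v \<le> L * s * (norm v)\<^sup>2"
    proof -
      have "(g (x + s *\<^sub>R v) - g x) \<bullet> v \<le> norm (g (x + s *\<^sub>R v) - g x) * norm v"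
        by (rule norm_cauchy_schwarz)
      also have "\<dots> \<le> L * norm (x - (x + s *\<^sub>R v)) * norm v"
        using lip[of x "x + s *\<^sub>R v"] by (intro mult_right_mono) (auto simp: norm_minus_commute)
      also have "\<dots> = L * s * (norm v)\<^sup>2"
        using s by (simp add: power2_eq_square)
      finally show ?thesis .
    qed
    ultimately show "\<exists>y. DERIV \<phi> s :> y \<and> y \<le> 0" by force
  qed simp
  then show ?thesis by (simp add: \<phi>_def v_def)
qed

lemma lipschitz_gradient_norm_sq_le:
  fixes f :: "'v::real_inner \<Rightarrow> real" and g :: "'v \<Rightarrow> 'v"
  assumes der: "\<And>x. (f has_derivative (\<lambda>h. g x \<bullet> h)) (at x)"
    and lip: "\<And>x y. norm (g y - g x) \<le> L * norm (x - y)"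
    and L: "L \<ge> 0" and lower: "\<And>x. l \<le> f x"
  shows "(norm (g x))\<^sup>2 \<le> 2 * L * (f x - l)"
proof -
  have gradient_step: "l \<le> f x - s * (norm (g x))\<^sup>2 + L / 2 * s\<^sup>2 * (norm (g x))\<^sup>2" for s
  proof -
    have "l \<le> f (x - s *\<^sub>R g x)" by (rule lower)
    also have "\<dots> \<le> f x + g x \<bullet> ((x - s *\<^sub>R g x) - x) + L / 2 * (norm ((x - s *\<^sub>R g x) - x))\<^sup>2"
      by (rule lipschitz_gradient_upper_bound[OF der lip])
    also have "\<dots> = f x - s * (norm (g x))\<^sup>2 + L / 2 * s\<^sup>2 * (norm (g x))\<^sup>2"
      by (simp add: power2_norm_eq_inner power_mult_distrib)
    finally show ?thesis .
  qed
  show ?thesis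
  proof (cases "L = 0")
    case True
    have "(norm (g x))\<^sup>2 = 0"
    proof (rule ccontr)
      assume "(norm (g x))\<^sup>2 \<noteq> 0"
      then have "(f x - l + 1) / (norm (g x))\<^sup>2 * (norm (g x))\<^sup>2 = f x - l + 1"
        by simp
      with gradient_step[of "(f x - l + 1) / (norm (g x))\<^sup>2"] True show False
        by simp
    qed
    then show ?thesis using True by simp
  next
    case False
    with L have "L > 0" by simp
    with gradient_step[of "1 / L"] show ?thesis
      by (simp add: power2_eq_square field_simps)
  qed
qed

lemma strong_convexity_le_lipschitz_gradient:
  fixes f :: "'v::euclidean_space \<Rightarrow> real" and g :: "'v \<Rightarrow> 'v"
  assumes der: "\<And>x. (f has_derivative (\<lambda>h. g x \<bullet> h)) (at x)"
    and lip: "\<And>x y. norm (g y - g x) \<le> L * norm (x - y)"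
    and convex: "\<And>x y. f y \<ge> f x + g x \<bullet> (y - x) + \<mu> / 2 * (norm (y - x))\<^sup>2"
  shows "\<mu> \<le> L"
proof -
  obtain b :: 'v where "b \<in> Basis" using nonempty_Basis by blast
  then have "norm (b - 0) = 1" by simp
  moreover have "f 0 + g 0 \<bullet> (b - 0) + \<mu> / 2 * (norm (b - 0))\<^sup>2
      \<le> f 0 + g 0 \<bullet> (b - 0) + L / 2 * (norm (b - 0))\<^sup>2"
    using convex lipschitz_gradient_upper_bound[OF der lip] by (rule order_trans)
  ultimately show ?thesis by simp
qed

(* The stepsize lower bound alpha = min {1 / (2 c L), gb}, whose first term is +infinity for L = 0. *)
definition sps_min_step :: "real \<Rightarrow> real \<Rightarrow> real \<Rightarrow> real" where
  "sps_min_step c L gb = (if L = 0 then gb else min (1 / (2 * c * L)) gb)"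

lemma sps_min_step_pos: "c > 0 \<Longrightarrow> gb > 0 \<Longrightarrow> L \<ge> 0 \<Longrightarrow> 0 < sps_min_step c L gb"
  by (simp add: sps_min_step_def)

lemma sps_step_bounds:
  fixes g :: "'v::real_normed_vector"
  assumes c: "c > 0" and gb: "gb > 0" and L: "L \<ge> 0" and lower: "l \<le> a"
    and gradient: "(norm g)\<^sup>2 \<le> 2 * L * (a - l)"
  shows "sps_min_step c L gb \<le> sps_step c gb a l g" "sps_step c gb a l g \<le> gb"
    "sps_step c gb a l g * (norm g)\<^sup>2 \<le> (a - l) / c"
proof -
  show "sps_step c gb a l g \<le> gb" by (simp add: sps_step_def)
  show "sps_step c gb a l g * (norm g)\<^sup>2 \<le> (a - l) / c"
  proof (cases "g = 0")
    case True
    then show ?thesis using lower c by (simp add: sps_step_def)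
  next
    case False
    then have "sps_step c gb a l g \<le> (a - l) / (c * (norm g)\<^sup>2)"
      by (simp add: sps_step_def)
    then show ?thesis
      using False c by (simp add: field_simps)
  qed
  show "sps_min_step c L gb \<le> sps_step c gb a l g"
  proof (cases "g = 0")
    case True
    then show ?thesis by (simp add: sps_step_def sps_min_step_def)
  next
    case False
    then have "0 < (norm g)\<^sup>2" by simp
    with gradient have "L \<noteq> 0" "a - l \<noteq> 0"
      by auto
    with L lower have "L > 0" "a - l > 0"
      by auto
    with gradient c have "1 / (2 * c * L) \<le> (a - l) / (c * (norm g)\<^sup>2)"
      using \<open>0 < (norm g)\<^sup>2\<close> by (simp add: field_simps)
    then show ?thesis
      using False \<open>L > 0\<close> by (auto simp: sps_step_def sps_min_step_def)
  qed
qed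

lemma sum_sq_dist_decompose_mean:
  fixes v :: "'i \<Rightarrow> 'v::real_inner"
  assumes "finite I" "I \<noteq> {}"
  defines "m \<equiv> (1 / real (card I)) *\<^sub>R sum v I"
  shows "(\<Sum>i\<in>I. (norm (y - v i))\<^sup>2) = (\<Sum>i\<in>I. (norm (m - v i))\<^sup>2) + real (card I) * (norm (y - m))\<^sup>2"
proof -
  have "(\<Sum>i\<in>I. m - v i) = 0"
    using assms by (simp add: sum_subtractf m_def sum_constant_scaleR)
  then have "(\<Sum>i\<in>I. 2 * ((y - m) \<bullet> (m - v i))) = 0"
    by (simp add: inner_sum_right[symmetric] sum_distrib_left[symmetric])
  moreover have "(norm (y - v i))\<^sup>2
      = (norm (m - v i))\<^sup>2 + 2 * ((y - m) \<bullet> (m - v i)) + (norm (y - m))\<^sup>2" for i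
    by (simp add: power2_norm_eq_inner inner_diff_left inner_diff_right inner_commute)
  ultimately show ?thesis
    by (simp add: sum.distrib inner_sum_right sum_distrib_left)
qed

lemma norm_sum_sq_le:
  fixes v :: "'i \<Rightarrow> 'v::real_inner"
  assumes "finite I"
  shows "(norm (sum v I))\<^sup>2 \<le> real (card I) * (\<Sum>i\<in>I. (norm (v i))\<^sup>2)"
proof (cases "I = {}")
  case False
  define m where "m = (1 / real (card I)) *\<^sub>R sum v I"
  have card: "real (card I) > 0" using assms False by (simp add: card_gt_0_iff)
  have "real (card I) * (norm m)\<^sup>2 \<le> (\<Sum>i\<in>I. (norm (0 - v i))\<^sup>2)"
    using sum_sq_dist_decompose_mean[OF assms False, of 0 v]
      sum_nonneg[of I "\<lambda>i. (norm (m - v i))\<^sup>2"]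
    by (simp add: m_def)
  then show ?thesis
    using card by (simp add: m_def power2_eq_square field_simps)
qed simp

lemma sum_window_sums_le:
  fixes f v w :: "nat \<Rightarrow> real" and s :: "nat \<Rightarrow> nat"
  assumes window: "\<And>t. t < s t + m"
    and f: "\<And>k. k < T \<Longrightarrow> 0 \<le> f k" and v: "\<And>k. k < T \<Longrightarrow> 0 \<le> v k"
    and w: "\<And>t k. t < T \<Longrightarrow> s t \<le> k \<Longrightarrow> k < t \<Longrightarrow> 0 \<le> w t \<and> w t \<le> v k"
  shows "(\<Sum>t<T. w t * (\<Sum>k\<in>{s t..<t}. f k)) \<le> m * (\<Sum>k<T. v k * f k)"
proof -
  define R where "R t k \<longleftrightarrow> s t \<le> k \<and> k < t" for t k
  have window_eq: "{s t..<t} = {k \<in> {..<T}. R t k}" if "t < T" for t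
    using that by (auto simp: R_def)
  have card_le: "card {t \<in> {..<T}. R t k} \<le> m" for k
  proof -
    have "{t \<in> {..<T}. R t k} \<subseteq> {k<..<k + m}"
      using window by (auto simp: R_def) (meson add_le_mono1 less_le_trans)
    from card_mono[OF _ this] show ?thesis by simp
  qed
  have "(\<Sum>t<T. w t * (\<Sum>k\<in>{s t..<t}. f k)) = (\<Sum>t<T. \<Sum>k\<in>{k \<in> {..<T}. R t k}. w t * f k)"
    by (auto simp: window_eq sum_distrib_left intro!: sum.cong)
  also have "\<dots> \<le> (\<Sum>t<T. \<Sum>k\<in>{k \<in> {..<T}. R t k}. v k * f k)"
    using w f by (intro sum_mono mult_right_mono) (auto simp: R_def)
  also have "\<dots> = (\<Sum>k<T. \<Sum>t\<in>{t \<in> {..<T}. R t k}. v k * f k)"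
    by (rule sum.swap_restrict) auto
  also have "\<dots> = (\<Sum>k<T. card {t \<in> {..<T}. R t k} * (v k * f k))"
    by simp
  also have "\<dots> \<le> (\<Sum>k<T. m * (v k * f k))"
  proof (rule sum_mono)
    fix k assume "k \<in> {..<T}"
    then show "card {t \<in> {..<T}. R t k} * (v k * f k) \<le> m * (v k * f k)"
      using card_le[of k] f v by (intro mult_right_mono) auto
  qed
  finally show ?thesis by (simp add: sum_distrib_left)
qed

lemma linear_recurrence_le:
  fixes e b :: "nat \<Rightarrow> real"
  assumes q: "0 \<le> q" and step: "\<And>t. t < T \<Longrightarrow> e (Suc t) \<le> q * e t + b t"
  shows "e T \<le> q ^ T * e 0 + (\<Sum>t<T. q ^ (T - 1 - t) * b t)"
  using step
proof (induction T)
  case 0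
  show ?case by simp
next
  case (Suc T)
  have shift: "q * (\<Sum>t<T. q ^ (T - 1 - t) * b t) = (\<Sum>t<T. q ^ (T - t) * b t)"
    unfolding sum_distrib_left
  proof (rule sum.cong[OF refl])
    fix t assume "t \<in> {..<T}"
    then have "T - t = Suc (T - 1 - t)" by auto
    then show "q * (q ^ (T - 1 - t) * b t) = q ^ (T - t) * b t" by simp
  qed
  have "e (Suc T) \<le> q * e T + b T"
    using Suc.prems by simp
  also have "\<dots> \<le> q * (q ^ T * e 0 + (\<Sum>t<T. q ^ (T - 1 - t) * b t)) + b T"
    using Suc q by (intro add_right_mono mult_left_mono) auto
  also have "\<dots> = q ^ Suc T * e 0 + (\<Sum>t<Suc T. q ^ (Suc T - 1 - t) * b t)"
    by (simp add: distrib_left shift[simplified])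
  finally show ?case .
qed

lemma sum_power_diff_le_inverse:
  fixes a :: real
  assumes a: "0 < a" "a \<le> 1"
  shows "(\<Sum>t<T. (1 - a) ^ (T - 1 - t)) \<le> 1 / a"
proof -
  have "a * (\<Sum>t<T. (1 - a) ^ (T - 1 - t)) = 1 - (1 - a) ^ T"
    using one_diff_power_eq[of "1 - a" T] sum.nat_diff_reindex[of "\<lambda>j. (1 - a) ^ j" T] by simp
  also have "\<dots> \<le> 1"
    using a by simp
  finally show ?thesis
    using a by (simp add: field_simps)
qed

section \<open>Integration over finite products\<close>

lemma integral_eq_if_nn_integral_eq:
  fixes f g :: "'a \<Rightarrow> real"
  assumes f: "integrable M f" "AE x in M. 0 \<le> f x"
    and g: "g \<in> borel_measurable M" "AE x in M. 0 \<le> g x"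
    and eq: "(\<integral>\<^sup>+x. ennreal (g x) \<partial>M) = (\<integral>\<^sup>+x. ennreal (f x) \<partial>M)"
  shows "integrable M g" "integral\<^sup>L M g = integral\<^sup>L M f"
proof -
  have f_nn: "(\<integral>\<^sup>+x. ennreal (f x) \<partial>M) = ennreal (integral\<^sup>L M f)"
    by (rule nn_integral_eq_integral[OF f])
  show int_g: "integrable M g"
    using g eq f_nn by (intro integrableI_nonneg) auto
  have "ennreal (integral\<^sup>L M g) = ennreal (integral\<^sup>L M f)"
    using nn_integral_eq_integral[OF int_g g(2)] eq f_nn by simp
  then show "integral\<^sup>L M g = integral\<^sup>L M f"
    using f g by (simp add: integral_nonneg_AE)
qed

lemma nn_integral_PiM_independent_coordinate:
  fixes M :: "'i \<Rightarrow> 'a measure" and h :: "('i \<Rightarrow> 'a) \<Rightarrow> 'b"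
  assumes I: "finite I" "j \<in> I" and prob: "\<And>i. i \<in> I \<Longrightarrow> prob_space (M i)"
    and h: "h \<in> measurable (PiM I M) N" and f: "case_prod f \<in> borel_measurable (N \<Otimes>\<^sub>M M j)"
    and indep: "\<And>w y. h (w(j := y)) = h w"
  shows "(\<integral>\<^sup>+w. f (h w) (w j) \<partial>PiM I M) = (\<integral>\<^sup>+w. (\<integral>\<^sup>+\<xi>. f (h w) \<xi> \<partial>M j) \<partial>PiM I M)"
proof -
  (* product_sigma_finite needs a probability space at every index, so pad M outside I. *)
  define M' where "M' i = (if i \<in> I then M i else return (count_space UNIV) undefined)" for i
  interpret product_prob_space M'
    unfolding product_prob_space_def product_prob_space_axioms_def product_sigma_finite_def
    using prob by (auto simp: M'_def prob_space_return intro: prob_space_imp_sigma_finite)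
  interpret Mj: prob_space "M j" using prob I by blast
  define J where "J = I - {j}"
  have IJ: "I = insert j J" "finite J" "j \<notin> J"
    using I by (auto simp: J_def)
  have PiM_eq: "PiM I M = PiM (insert j J) M'"
    by (auto simp: IJ(1)[symmetric] M'_def intro!: PiM_cong)
  have M'_j: "M' j = M j"
    using I by (simp add: M'_def)
  note h' = h[unfolded PiM_eq]
  have f_meas: "(\<lambda>w. f (h w) (w j)) \<in> borel_measurable (PiM (insert j J) M')"
    using measurable_compose[OF measurable_Pair[OF h' measurable_component_singleton[OF insertI1]]
        f[folded M'_j]]
    by simp
  have "(\<integral>\<^sup>+w. f (h w) (w j) \<partial>PiM I M) = (\<integral>\<^sup>+w. (\<integral>\<^sup>+\<xi>. f (h w) \<xi> \<partial>M j) \<partial>PiM J M')"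
    unfolding PiM_eq
    by (subst product_nn_integral_insert[OF IJ(2,3)])
       (use f_meas in \<open>simp_all add: indep M'_j\<close>)
  also have "\<dots> = (\<integral>\<^sup>+w. (\<integral>\<^sup>+\<xi>. f (h w) \<xi> \<partial>M j) \<partial>PiM I M)"
    unfolding PiM_eq
    by (subst product_nn_integral_insert[OF IJ(2,3)])
       (use h' f M'_j in \<open>simp_all add: indep Mj.emeasure_space_1\<close>)
  finally show ?thesis .
qed

section \<open>FedSPS along a single sample path\<close>

locale fedsps_path =
  fixes n tau :: nat
    and F :: "nat \<Rightarrow> 'v::euclidean_space \<Rightarrow> 'a \<Rightarrow> real" and G :: "nat \<Rightarrow> 'v \<Rightarrow> 'a \<Rightarrow> 'v"
    and l :: "nat \<Rightarrow> real" and L mu c gb :: real and x0 xstar :: 'v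
  assumes n_pos: "n \<ge> 1" and tau_pos: "tau \<ge> 1" and L_nonneg: "L \<ge> 0" and mu_nonneg: "mu \<ge> 0"
    and c_pos: "c > 0" and gb_pos: "gb > 0"
begin

(* The almost-sure hypotheses of the theorem, for one sample of client i. *)
definition regular :: "nat \<Rightarrow> 'a \<Rightarrow> bool" where
  "regular i \<xi> \<longleftrightarrow>
     (\<forall>x. ((\<lambda>z. F i z \<xi>) has_derivative (\<lambda>h. G i x \<xi> \<bullet> h)) (at x)) \<and> (\<forall>x. l i \<le> F i x \<xi>)
     \<and> (\<forall>x y. norm (G i y \<xi> - G i x \<xi>) \<le> L * norm (x - y))
     \<and> (\<forall>x y. F i y \<xi> \<ge> F i x \<xi> + G i x \<xi> \<bullet> (y - x) + mu / 2 * (norm (y - x))\<^sup>2)"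

abbreviation "alpha \<equiv> sps_min_step c L gb"
abbreviation "iterate \<equiv> fedsps F G l c gb tau n x0"
abbreviation "mean_iterate \<equiv> fedsps_avg F G l c gb tau n x0"

(* stepsize w t i is gamma_t^i; mean_gain, mean_opt_gap and drift are A_t, B_t and R_t of the proof
   idea, and dist_sq is e_t. *)
definition "stepsize w t i =
  sps_step c gb (F i (iterate w t i) (w (t, i))) (l i) (G i (iterate w t i) (w (t, i)))"
definition "update w t i = stepsize w t i *\<^sub>R G i (iterate w t i) (w (t, i))"
definition "sample_gap w t i = F i (iterate w t i) (w (t, i)) - l i"
definition "gain w t i = stepsize w t i * sample_gap w t i"
definition "opt_gap w t i = F i xstar (w (t, i)) - l i"
definition "mean_gain w t = (\<Sum>i<n. gain w t i) / n"
definition "mean_opt_gap w t = (\<Sum>i<n. opt_gap w t i) / n"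
definition "dist_sq w t = (norm (mean_iterate w t - xstar))\<^sup>2"
definition "drift w t = (\<Sum>i<n. (norm (mean_iterate w t - iterate w t i))\<^sup>2) / n"
definition "last_sync t = tau * (t div tau)"

lemma n_real_pos: "real n > 0"
  using n_pos by simp

lemma alpha_pos: "alpha > 0"
  using sps_min_step_pos c_pos gb_pos L_nonneg .

lemma mu_le_L: "regular i \<xi> \<Longrightarrow> mu \<le> L"
  unfolding regular_def by (auto intro: strong_convexity_le_lipschitz_gradient)

lemma regular_step_bounds:
  assumes "regular i (w (t, i))"
  shows "alpha \<le> stepsize w t i" "stepsize w t i \<le> gb" "0 \<le> sample_gap w t i"
    "0 \<le> opt_gap w t i" "(norm (update w t i))\<^sup>2 \<le> gain w t i / c"
proof -
  have der: "\<And>x. ((\<lambda>z. F i z (w (t, i))) has_derivative (\<lambda>h. G i x (w (t, i)) \<bullet> h)) (at x)"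
    and lip: "\<And>x y. norm (G i y (w (t, i)) - G i x (w (t, i))) \<le> L * norm (x - y)"
    and lower: "\<And>x. l i \<le> F i x (w (t, i))"
    using assms by (simp_all add: regular_def)
  have "(norm (G i (iterate w t i) (w (t, i))))\<^sup>2 \<le> 2 * L * (F i (iterate w t i) (w (t, i)) - l i)"
    by (rule lipschitz_gradient_norm_sq_le[OF der lip L_nonneg lower])
  note sps = sps_step_bounds[OF c_pos gb_pos L_nonneg lower this, folded stepsize_def]
  show "alpha \<le> stepsize w t i" "stepsize w t i \<le> gb"
    using sps by simp_all
  show "0 \<le> sample_gap w t i" "0 \<le> opt_gap w t i"
    using lower by (simp_all add: sample_gap_def opt_gap_def)
  have "(norm (update w t i))\<^sup>2
      = stepsize w t i * (stepsize w t i * (norm (G i (iterate w t i) (w (t, i))))\<^sup>2)"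
    by (simp add: update_def power_mult_distrib power2_eq_square)
  also have "\<dots> \<le> stepsize w t i * (sample_gap w t i / c)"
    using sps alpha_pos by (intro mult_left_mono) (auto simp: sample_gap_def)
  finally show "(norm (update w t i))\<^sup>2 \<le> gain w t i / c"
    by (simp add: gain_def)
qed

lemma regular_gain_bounds:
  assumes "regular i (w (t, i))"
  shows "alpha * sample_gap w t i \<le> gain w t i" "0 \<le> gain w t i"
  using regular_step_bounds[where w=w and t=t and i=i, OF assms] alpha_pos
  by (auto simp: gain_def intro: mult_right_mono order_trans[OF less_imp_le])

lemma iterate_Suc:
  "iterate w (Suc t) =
    (if tau dvd Suc t then (\<lambda>i. (1 / real n) *\<^sub>R (\<Sum>j<n. iterate w t j - update w t j))
     else (\<lambda>j. iterate w t j - update w t j))"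
  by (simp add: update_def stepsize_def Let_def)

lemma mean_iterate_0: "mean_iterate w 0 = x0"
  using n_real_pos by (simp add: fedsps_avg_def sum_constant_scaleR)

lemma mean_iterate_Suc:
  "mean_iterate w (Suc t) = mean_iterate w t - (1 / real n) *\<^sub>R (\<Sum>i<n. update w t i)"
  using n_real_pos
  by (simp add: fedsps_avg_def iterate_Suc sum_subtractf scaleR_diff_right sum_constant_scaleR
      del: fedsps.simps)

lemma iterate_eq_if_samples_agree:
  "(\<And>k j. k < t \<Longrightarrow> w (k, j) = w' (k, j)) \<Longrightarrow> iterate w t = iterate w' t"
proof (induction t)
  case (Suc t)
  then show ?case by (simp add: Let_def)
qed simp

lemma last_sync_le: "last_sync t \<le> t"
  by (simp add: last_sync_def)

lemma less_last_sync_add: "t < last_sync t + tau"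
proof -
  have "last_sync t + t mod tau = t"
    using div_mult_mod_eq[of t tau] by (simp add: last_sync_def mult.commute)
  moreover have "t mod tau < tau" using tau_pos by simp
  ultimately show ?thesis by linarith
qed

lemma iterate_eq_last_sync:
  "iterate w t i = mean_iterate w (last_sync t) - (\<Sum>k\<in>{last_sync t..<t}. update w k i)"
proof (induction t arbitrary: i)
  case 0
  show ?case by (simp add: last_sync_def mean_iterate_0)
next
  case (Suc t)
  show ?case
  proof (cases "tau dvd Suc t")
    case True
    then have "last_sync (Suc t) = Suc t" by (simp add: last_sync_def)
    then show ?thesis
      using True n_real_pos
      by (simp add: fedsps_avg_def iterate_Suc sum_constant_scaleR del: fedsps.simps)
  next
    case False
    then have "Suc t div tau = t div tau"
      by (simp add: div_Suc dvd_eq_mod_eq_0)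
    then have sync: "last_sync (Suc t) = last_sync t" by (simp add: last_sync_def)
    have "{last_sync t..<Suc t} = insert t {last_sync t..<t}"
      using last_sync_le[of t] by auto
    then show ?thesis
      using False Suc.IH[of i] by (simp add: sync iterate_Suc del: fedsps.simps)
  qed
qed

lemma drift_le:
  assumes regular: "\<And>k i. k < t \<Longrightarrow> i < n \<Longrightarrow> regular i (w (k, i))"
  shows "drift w t \<le> tau / c * (\<Sum>k\<in>{last_sync t..<t}. mean_gain w k)"
proof -
  let ?K = "{last_sync t..<t}"
  have "{..<n} \<noteq> {}" using n_pos by (simp add: lessThan_empty_iff)
  then have "(\<Sum>i<n. (norm (mean_iterate w t - iterate w t i))\<^sup>2)
      \<le> (\<Sum>i<n. (norm (mean_iterate w (last_sync t) - iterate w t i))\<^sup>2)"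
    using sum_sq_dist_decompose_mean[of "{..<n}" "mean_iterate w (last_sync t)" "iterate w t"]
    by (simp add: fedsps_avg_def)
  also have "\<dots> \<le> (\<Sum>i<n. tau / c * (\<Sum>k\<in>?K. gain w k i))"
  proof (rule sum_mono)
    fix i assume i: "i \<in> {..<n}"
    have "(norm (mean_iterate w (last_sync t) - iterate w t i))\<^sup>2 = (norm (\<Sum>k\<in>?K. update w k i))\<^sup>2"
      by (subst iterate_eq_last_sync) simp
    also have "\<dots> \<le> real (card ?K) * (\<Sum>k\<in>?K. (norm (update w k i))\<^sup>2)"
      by (rule norm_sum_sq_le) simp
    also have "\<dots> \<le> real tau * (\<Sum>k\<in>?K. gain w k i / c)"
    proof (rule mult_mono)
      show "real (card ?K) \<le> real tau"
        using less_last_sync_add[of t] by simp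
      show "(\<Sum>k\<in>?K. (norm (update w k i))\<^sup>2) \<le> (\<Sum>k\<in>?K. gain w k i / c)"
        using regular i by (intro sum_mono regular_step_bounds) auto
    qed (auto intro: sum_nonneg)
    finally show "(norm (mean_iterate w (last_sync t) - iterate w t i))\<^sup>2
        \<le> tau / c * (\<Sum>k\<in>?K. gain w k i)"
      by (simp add: sum_divide_distrib[symmetric])
  qed
  also have "\<dots> = tau / c * (\<Sum>k\<in>?K. \<Sum>i<n. gain w k i)"
    by (simp add: sum_distrib_left sum.swap[of _ "{..<n}"])
  also have "\<dots> = tau / c * (\<Sum>k\<in>?K. real n * mean_gain w k)"
    using n_real_pos by (simp add: mean_gain_def)
  also have "\<dots> = real n * (tau / c * (\<Sum>k\<in>?K. mean_gain w k))"
    by (simp add: sum_distrib_left[symmetric])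
  finally show ?thesis
    using n_real_pos by (simp add: drift_def field_simps)
qed

lemma client_step_bound:
  assumes regular: "regular i (w (t, i))" and c: "c \<ge> 2"
  defines "d \<equiv> update w t i" and "p \<equiv> iterate w t i"
  shows "- 2 * ((mean_iterate w t - xstar) \<bullet> d) + (norm d)\<^sup>2
     \<le> - gain w t i + 2 * gb * opt_gap w t i - alpha * mu * (norm (xstar - p))\<^sup>2
        + (norm (mean_iterate w t - p))\<^sup>2"
proof -
  define g where "g = G i p (w (t, i))"
  define \<gamma> where "\<gamma> = stepsize w t i"
  define r where "r = mean_iterate w t - p"
  note bounds = regular_step_bounds[where w=w and t=t and i=i, OF regular, folded \<gamma>_def d_def]
  have "F i xstar (w (t, i)) \<ge> F i p (w (t, i)) + g \<bullet> (xstar - p) + mu / 2 * (norm (xstar - p))\<^sup>2"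
    using regular by (simp add: regular_def g_def)
  then have "g \<bullet> (p - xstar) \<ge> sample_gap w t i - opt_gap w t i + mu / 2 * (norm (xstar - p))\<^sup>2"
    by (simp add: sample_gap_def opt_gap_def p_def inner_diff_right)
  then have "\<gamma> * (g \<bullet> (p - xstar))
      \<ge> \<gamma> * (sample_gap w t i - opt_gap w t i + mu / 2 * (norm (xstar - p))\<^sup>2)"
    using bounds alpha_pos by (intro mult_left_mono) auto
  moreover have "\<gamma> * opt_gap w t i \<le> gb * opt_gap w t i"
    using bounds by (intro mult_right_mono) auto
  moreover have "alpha * (mu / 2 * (norm (xstar - p))\<^sup>2) \<le> \<gamma> * (mu / 2 * (norm (xstar - p))\<^sup>2)"
    using bounds mu_nonneg by (intro mult_right_mono) auto
  ultimately have descent: "\<gamma> * (g \<bullet> (p - xstar))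
      \<ge> gain w t i - gb * opt_gap w t i + alpha * mu / 2 * (norm (xstar - p))\<^sup>2"
    by (simp add: gain_def \<gamma>_def algebra_simps)
  have "0 \<le> (norm (d + r))\<^sup>2" by simp
  then have cross: "- 2 * (d \<bullet> r) \<le> (norm d)\<^sup>2 + (norm r)\<^sup>2"
    by (simp add: power2_norm_eq_inner inner_add_left inner_add_right inner_commute)
  have split: "(mean_iterate w t - xstar) \<bullet> d = \<gamma> * (g \<bullet> (p - xstar)) + d \<bullet> r"
    by (simp add: d_def update_def \<gamma>_def g_def p_def r_def inner_diff_left inner_diff_right
        inner_commute algebra_simps)
  have "2 * (norm d)\<^sup>2 \<le> c * (norm d)\<^sup>2"
    using c by (intro mult_right_mono) auto
  also have "\<dots> \<le> gain w t i"
    using bounds(5) c_pos by (simp add: field_simps)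
  finally show ?thesis
    using descent cross split by (simp add: r_def algebra_simps)
qed

lemma dist_sq_Suc_le_client_average:
  fixes w :: "nat \<times> nat \<Rightarrow> 'a" and t :: nat
  defines "z \<equiv> mean_iterate w t - xstar" and "d \<equiv> update w t"
  shows "dist_sq w (Suc t) \<le> (norm z)\<^sup>2 + (\<Sum>i<n. - 2 * (z \<bullet> d i) + (norm (d i))\<^sup>2) / n"
proof -
  have "dist_sq w (Suc t) = (norm (z - (1 / real n) *\<^sub>R sum d {..<n}))\<^sup>2"
    by (simp add: dist_sq_def mean_iterate_Suc z_def d_def algebra_simps)
  also have "\<dots> = (norm z)\<^sup>2 - 2 * (z \<bullet> sum d {..<n}) / n + (norm (sum d {..<n}))\<^sup>2 / (real n)\<^sup>2"
    using n_real_pos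
    by (simp add: power2_norm_eq_inner inner_diff_left inner_diff_right inner_commute)
       (simp add: power2_eq_square field_simps)
  also have "\<dots> \<le> (norm z)\<^sup>2 - 2 * (z \<bullet> sum d {..<n}) / n
      + real n * (\<Sum>i<n. (norm (d i))\<^sup>2) / (real n)\<^sup>2"
    using norm_sum_sq_le[of "{..<n}" d] by (intro add_left_mono divide_right_mono) auto
  also have "\<dots> = (norm z)\<^sup>2 + (- 2 * (z \<bullet> sum d {..<n}) + (\<Sum>i<n. (norm (d i))\<^sup>2)) / n"
    using n_real_pos by (simp add: power2_eq_square field_simps)
  also have "- 2 * (z \<bullet> sum d {..<n}) + (\<Sum>i<n. (norm (d i))\<^sup>2)
      = (\<Sum>i<n. - 2 * (z \<bullet> d i) + (norm (d i))\<^sup>2)"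
    by (simp add: sum.distrib inner_sum_right sum_distrib_left sum_subtractf sum_negf)
  finally show ?thesis .
qed

lemma dist_sq_Suc_le:
  assumes regular: "\<And>i. i < n \<Longrightarrow> regular i (w (t, i))" and c: "c \<ge> 2"
  shows "dist_sq w (Suc t)
    \<le> (1 - mu * alpha) * dist_sq w t - mean_gain w t + 2 * gb * mean_opt_gap w t + drift w t"
proof -
  define z where "z = mean_iterate w t - xstar"
  define d where "d = update w t"
  have "(\<Sum>i<n. - 2 * (z \<bullet> d i) + (norm (d i))\<^sup>2)
     \<le> (\<Sum>i<n. - gain w t i + 2 * gb * opt_gap w t i - alpha * mu * (norm (xstar - iterate w t i))\<^sup>2
                 + (norm (mean_iterate w t - iterate w t i))\<^sup>2)"
  proof (rule sum_mono)
    fix i assume "i \<in> {..<n}"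
    then have "regular i (w (t, i))" using regular by simp
    from client_step_bound[where w=w and t=t and i=i, OF this c]
    show "- 2 * (z \<bullet> d i) + (norm (d i))\<^sup>2
        \<le> - gain w t i + 2 * gb * opt_gap w t i - alpha * mu * (norm (xstar - iterate w t i))\<^sup>2
           + (norm (mean_iterate w t - iterate w t i))\<^sup>2"
      by (simp add: z_def d_def)
  qed
  also have "\<dots> = real n * (- mean_gain w t + 2 * gb * mean_opt_gap w t + drift w t)
      - alpha * mu * (\<Sum>i<n. (norm (xstar - iterate w t i))\<^sup>2)"
    using n_real_pos
    by (simp add: mean_gain_def mean_opt_gap_def drift_def sum.distrib sum_subtractf sum_negf
        sum_distrib_left field_simps)
  also have "\<dots> \<le> real n * (- mean_gain w t + 2 * gb * mean_opt_gap w t + drift w t)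
      - alpha * mu * (real n * (norm z)\<^sup>2)"
  proof -
    have "{..<n} \<noteq> {}" using n_pos by (simp add: lessThan_empty_iff)
    then have "real n * (norm z)\<^sup>2 \<le> (\<Sum>i<n. (norm (xstar - iterate w t i))\<^sup>2)"
      using sum_sq_dist_decompose_mean[of "{..<n}" xstar "iterate w t"]
      by (simp add: fedsps_avg_def z_def norm_minus_commute sum_nonneg)
    then show ?thesis
      using alpha_pos mu_nonneg by (simp add: mult_left_mono)
  qed
  finally have "(\<Sum>i<n. - 2 * (z \<bullet> d i) + (norm (d i))\<^sup>2) / n
      \<le> - mean_gain w t + 2 * gb * mean_opt_gap w t + drift w t - alpha * mu * (norm z)\<^sup>2"
    using n_real_pos by (simp add: field_simps)
  with dist_sq_Suc_le_client_average[of w t, folded z_def d_def] show ?thesis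
    by (simp add: dist_sq_def z_def algebra_simps)
qed

lemma mean_gain_nonneg: "(\<And>i. i < n \<Longrightarrow> regular i (w (t, i))) \<Longrightarrow> 0 \<le> mean_gain w t"
  unfolding mean_gain_def by (intro divide_nonneg_nonneg sum_nonneg regular_gain_bounds(2)) auto

lemma weighted_sum_drift_le:
  assumes regular: "\<And>t i. t < T \<Longrightarrow> i < n \<Longrightarrow> regular i (w (t, i))"
    and q: "0 \<le> q" and \<theta>: "0 < \<theta>" "\<And>j. j \<le> tau \<Longrightarrow> \<theta> \<le> q ^ j"
  shows "(\<Sum>t<T. q ^ (T - 1 - t) * drift w t)
    \<le> (real tau)\<^sup>2 / (\<theta> * c) * (\<Sum>t<T. q ^ (T - 1 - t) * mean_gain w t)"
proof -
  have "(\<Sum>t<T. q ^ (T - 1 - t) * drift w t)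
      \<le> (\<Sum>t<T. q ^ (T - 1 - t) * (tau / c * (\<Sum>k\<in>{last_sync t..<t}. mean_gain w k)))"
    using regular q by (intro sum_mono mult_left_mono drift_le) auto
  also have "\<dots> = tau / c * (\<Sum>t<T. q ^ (T - 1 - t) * (\<Sum>k\<in>{last_sync t..<t}. mean_gain w k))"
    by (simp add: sum_distrib_left algebra_simps)
  also have "\<dots> \<le> tau / c * (tau * (\<Sum>k<T. q ^ (T - 1 - k) / \<theta> * mean_gain w k))"
  proof (intro mult_left_mono sum_window_sums_le[where s = last_sync])
    fix t k assume tk: "t < T" "last_sync t \<le> k" "k < t"
    then have "t - k \<le> tau" using less_last_sync_add[of t] by linarith
    then have "q ^ (T - 1 - t) * \<theta> \<le> q ^ (T - 1 - t) * q ^ (t - k)"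
      using \<theta> q by (intro mult_left_mono) auto
    also have "\<dots> = q ^ (T - 1 - k)"
      using tk by (simp add: power_add[symmetric])
    finally show "0 \<le> q ^ (T - 1 - t) \<and> q ^ (T - 1 - t) \<le> q ^ (T - 1 - k) / \<theta>"
      using q \<theta> by (simp add: field_simps)
  qed (use less_last_sync_add mean_gain_nonneg regular q \<theta> c_pos in auto)
  also have "\<dots> = (real tau)\<^sup>2 / (\<theta> * c) * (\<Sum>t<T. q ^ (T - 1 - t) * mean_gain w t)"
    by (simp add: power2_eq_square sum_distrib_left algebra_simps)
  finally show ?thesis .
qed

(* theta bounds the decay of the weights q^j across one averaging window. *)
lemma dist_sq_weighted_bound:
  assumes regular: "\<And>t i. t < T \<Longrightarrow> i < n \<Longrightarrow> regular i (w (t, i))"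
    and q: "0 \<le> q" "1 - mu * alpha \<le> q"
    and \<theta>: "0 < \<theta>" "\<And>j. j \<le> tau \<Longrightarrow> \<theta> \<le> q ^ j"
    and c: "2 * (real tau)\<^sup>2 \<le> \<theta> * c"
  shows "dist_sq w T + (\<Sum>t<T. q ^ (T - 1 - t) * mean_gain w t) / 2
    \<le> q ^ T * (norm (x0 - xstar))\<^sup>2 + 2 * gb * (\<Sum>t<T. q ^ (T - 1 - t) * mean_opt_gap w t)"
proof -
  define A where "A = (\<Sum>t<T. q ^ (T - 1 - t) * mean_gain w t)"
  define B where "B = (\<Sum>t<T. q ^ (T - 1 - t) * mean_opt_gap w t)"
  define R where "R = (\<Sum>t<T. q ^ (T - 1 - t) * drift w t)"
  have "1 \<le> (real tau)\<^sup>2" using tau_pos by simp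
  moreover have "\<theta> \<le> 1" using \<theta>(2)[of 0] by simp
  moreover have "\<theta> * c \<le> 1 * c" using \<open>\<theta> \<le> 1\<close> c_pos by (intro mult_right_mono) auto
  ultimately have c_ge_2: "c \<ge> 2" using c by linarith
  have "dist_sq w T \<le> q ^ T * dist_sq w 0
      + (\<Sum>t<T. q ^ (T - 1 - t) * (- mean_gain w t + 2 * gb * mean_opt_gap w t + drift w t))"
  proof (rule linear_recurrence_le[OF q(1)])
    fix t assume "t < T"
    then have "dist_sq w (Suc t)
        \<le> (1 - mu * alpha) * dist_sq w t - mean_gain w t + 2 * gb * mean_opt_gap w t + drift w t"
      using regular c_ge_2 by (intro dist_sq_Suc_le) auto
    moreover have "(1 - mu * alpha) * dist_sq w t \<le> q * dist_sq w t"
      using q by (intro mult_right_mono) (auto simp: dist_sq_def)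
    ultimately show "dist_sq w (Suc t)
        \<le> q * dist_sq w t + (- mean_gain w t + 2 * gb * mean_opt_gap w t + drift w t)"
      by linarith
  qed
  also have "\<dots> = q ^ T * (norm (x0 - xstar))\<^sup>2 - A + 2 * gb * B + R"
    by (simp add: A_def B_def R_def dist_sq_def mean_iterate_0 algebra_simps sum.distrib
        sum_subtractf sum_distrib_left)
  also have "R \<le> A / 2"
  proof -
    have "R \<le> (real tau)\<^sup>2 / (\<theta> * c) * A"
      unfolding R_def A_def by (rule weighted_sum_drift_le[OF regular q(1) \<theta>])
    also have "\<dots> \<le> 1 / 2 * A"
    proof (rule mult_right_mono)
      show "(real tau)\<^sup>2 / (\<theta> * c) \<le> 1 / 2"
        using c \<theta>(1) c_pos by (simp add: field_simps)
      show "0 \<le> A"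
        unfolding A_def using regular q
        by (intro sum_nonneg mult_nonneg_nonneg mean_gain_nonneg) auto
    qed
    finally show ?thesis by simp
  qed
  finally show ?thesis by (simp add: A_def B_def)
qed

lemma sum_sample_gap_le:
  assumes regular: "\<And>t i. t < T \<Longrightarrow> i < n \<Longrightarrow> regular i (w (t, i))"
    and c: "2 * (real tau)\<^sup>2 \<le> c"
  shows "alpha * (\<Sum>t<T. \<Sum>i<n. sample_gap w t i)
    \<le> 2 * real n * ((norm (x0 - xstar))\<^sup>2 + 2 * gb * (\<Sum>t<T. mean_opt_gap w t))"
proof -
  have "alpha * (\<Sum>t<T. \<Sum>i<n. sample_gap w t i) = (\<Sum>t<T. \<Sum>i<n. alpha * sample_gap w t i)"
    by (simp add: sum_distrib_left)
  also have "\<dots> \<le> (\<Sum>t<T. \<Sum>i<n. gain w t i)"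
    using regular by (intro sum_mono regular_gain_bounds(1)) auto
  also have "\<dots> = (\<Sum>t<T. real n * mean_gain w t)"
    using n_real_pos by (simp add: mean_gain_def)
  also have "\<dots> = real n * (\<Sum>t<T. mean_gain w t)"
    by (simp add: sum_distrib_left)
  also have "\<dots> \<le> real n * (2 * ((norm (x0 - xstar))\<^sup>2 + 2 * gb * (\<Sum>t<T. mean_opt_gap w t)))"
  proof (rule mult_left_mono)
    have "dist_sq w T + (\<Sum>t<T. mean_gain w t) / 2
        \<le> (norm (x0 - xstar))\<^sup>2 + 2 * gb * (\<Sum>t<T. mean_opt_gap w t)"
      using dist_sq_weighted_bound[OF regular, where q=1 and \<theta>=1] mu_nonneg alpha_pos c by simp
    moreover have "0 \<le> dist_sq w T" by (simp add: dist_sq_def)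
    ultimately show "(\<Sum>t<T. mean_gain w t)
        \<le> 2 * ((norm (x0 - xstar))\<^sup>2 + 2 * gb * (\<Sum>t<T. mean_opt_gap w t))"
      by simp
  qed simp
  finally show ?thesis by (simp add: algebra_simps)
qed

lemma dist_sq_geometric_bound:
  assumes regular: "\<And>t i. t < T \<Longrightarrow> i < n \<Longrightarrow> regular i (w (t, i))"
    and c: "4 * (real tau)\<^sup>2 \<le> c"
    and q: "0 \<le> 1 - mu * alpha" "\<And>j. j \<le> tau \<Longrightarrow> 1 / 2 \<le> (1 - mu * alpha) ^ j"
  shows "dist_sq w T \<le> (1 - mu * alpha) ^ T * (norm (x0 - xstar))\<^sup>2
    + (\<Sum>t<T. 2 * gb * (1 - mu * alpha) ^ (T - 1 - t) * mean_opt_gap w t)"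
proof -
  have "0 \<le> (\<Sum>t<T. (1 - mu * alpha) ^ (T - 1 - t) * mean_gain w t)"
    using regular q(1) by (intro sum_nonneg mult_nonneg_nonneg mean_gain_nonneg) auto
  moreover have "2 * (real tau)\<^sup>2 \<le> 1 / 2 * c"
    using c by simp
  note dist_sq_weighted_bound[where T=T and w=w, OF regular q(1) order_refl _ q(2) this]
  ultimately show ?thesis
    by (simp add: sum_distrib_left mult.assoc)
qed

end

section \<open>Expectations over the samples\<close>

locale fedsps_sampling = fedsps_path n tau F G l L mu c gb x0 xstar
  for n tau and F :: "nat \<Rightarrow> 'v::euclidean_space \<Rightarrow> 'a \<Rightarrow> real" and G l L mu c gb x0 xstar +
  fixes D :: "nat \<Rightarrow> 'a measure"
  assumes prob: "\<And>i. i < n \<Longrightarrow> prob_space (D i)"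
    and meas_F: "\<And>i. i < n \<Longrightarrow> (\<lambda>(x, \<xi>). F i x \<xi>) \<in> borel_measurable (borel \<Otimes>\<^sub>M D i)"
    and meas_G: "\<And>i. i < n \<Longrightarrow> (\<lambda>(x, \<xi>). G i x \<xi>) \<in> borel_measurable (borel \<Otimes>\<^sub>M D i)"
    and int_F: "\<And>i x. i < n \<Longrightarrow> integrable (D i) (F i x)"
    and AE_regular: "\<And>i. i < n \<Longrightarrow> AE \<xi> in D i. regular i \<xi>"
begin

abbreviation "samples T \<equiv> sample_space D n T"

lemma prob_space_samples: "prob_space (samples T)"
  unfolding sample_space_def by (rule prob_space_PiM) (auto intro: prob)

lemma measurable_sample: "t < T \<Longrightarrow> i < n \<Longrightarrow> (\<lambda>w. w (t, i)) \<in> measurable (samples T) (D i)"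
  using measurable_component_singleton[of "(t, i)" "{..<T} \<times> {..<n}" "\<lambda>(t, i). D i"]
  by (simp add: sample_space_def)

lemma distr_sample: "t < T \<Longrightarrow> i < n \<Longrightarrow> distr (samples T) (D i) (\<lambda>w. w (t, i)) = D i"
  using distr_PiM_component[of "{..<T} \<times> {..<n}" "\<lambda>(t, i). D i" "(t, i)"]
  by (auto simp: sample_space_def prob)

lemma AE_regular_samples: "AE w in samples T. \<forall>t<T. \<forall>i<n. regular i (w (t, i))"
proof -
  have "AE w in samples T. \<forall>p\<in>{..<T} \<times> {..<n}. regular (snd p) (w p)"
  proof (rule eventually_ball_finite)
    show "\<forall>p\<in>{..<T} \<times> {..<n}. AE w in samples T. regular (snd p) (w p)"
      unfolding sample_space_def
      by (auto intro!: AE_PiM_component prob AE_regular)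
  qed simp
  then show ?thesis by auto
qed

lemma
  fixes f :: "'a \<Rightarrow> real"
  assumes "t < T" "i < n" "f \<in> borel_measurable (D i)"
  shows integral_sample: "(\<integral>w. f (w (t, i)) \<partial>samples T) = (\<integral>\<xi>. f \<xi> \<partial>D i)"
    and integrable_sample: "integrable (D i) f \<Longrightarrow> integrable (samples T) (\<lambda>w. f (w (t, i)))"
  using integral_distr[OF measurable_sample assms(3)]
    integrable_distr_eq[OF measurable_sample assms(3)]
    distr_sample assms(1,2) by simp_all

lemma measurable_iterate: "t \<le> T \<Longrightarrow> i < n \<Longrightarrow> (\<lambda>w. iterate w t i) \<in> borel_measurable (samples T)"
proof (induction t arbitrary: i)
  case (Suc t)
  have update: "(\<lambda>w. update w t j) \<in> borel_measurable (samples T)" if j: "j < n" for j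
  proof -
    have "(\<lambda>w. (iterate w t j, w (t, j))) \<in> measurable (samples T) (borel \<Otimes>\<^sub>M D j)"
      using Suc j by (intro measurable_Pair measurable_sample) auto
    from measurable_compose[OF this meas_F[OF j]] measurable_compose[OF this meas_G[OF j]]
    show ?thesis
      unfolding update_def stepsize_def sps_step_def by simp
  qed
  have iterate: "(\<lambda>w. iterate w t j) \<in> borel_measurable (samples T)" if "j < n" for j
    using Suc that by simp
  show ?case
    using iterate update Suc.prems
    by (cases "tau dvd Suc t")
       (auto simp: iterate_Suc simp del: fedsps.simps
         intro!: borel_measurable_scaleR borel_measurable_sum borel_measurable_diff)
qed simp

lemma measurable_loc_obj: "i < n \<Longrightarrow> loc_obj F D i \<in> borel_measurable borel"
  unfolding loc_obj_def
  by (rule sigma_finite_measure.borel_measurable_lebesgue_integral[OF _ meas_F])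
     (auto intro: prob_space_imp_sigma_finite prob)

lemma nn_integral_loc_gap:
  assumes i: "i < n"
  shows "(\<integral>\<^sup>+\<xi>. ennreal (F i x \<xi> - l i) \<partial>D i) = ennreal (loc_obj F D i x - l i)"
    and "l i \<le> loc_obj F D i x"
proof -
  interpret prob_space "D i" by (rule prob[OF i])
  have int: "integrable (D i) (\<lambda>\<xi>. F i x \<xi> - l i)" using int_F[OF i] by simp
  have nonneg: "AE \<xi> in D i. 0 \<le> F i x \<xi> - l i"
    using AE_regular[OF i] by eventually_elim (simp add: regular_def)
  have "(\<integral>\<xi>. F i x \<xi> - l i \<partial>D i) = loc_obj F D i x - l i"
    using int_F[OF i] by (simp add: loc_obj_def prob_space)
  with nn_integral_eq_integral[OF int nonneg] integral_nonneg_AE[OF nonneg]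
  show "(\<integral>\<^sup>+\<xi>. ennreal (F i x \<xi> - l i) \<partial>D i) = ennreal (loc_obj F D i x - l i)"
    and "l i \<le> loc_obj F D i x"
    by simp_all
qed

definition "sigma_sq = (\<Sum>i<n. loc_obj F D i xstar - l i) / n"

lemma sigma_sq_nonneg: "0 \<le> sigma_sq"
  unfolding sigma_sq_def using nn_integral_loc_gap(2)
  by (intro divide_nonneg_nonneg sum_nonneg) auto

lemma
  assumes "t < T"
  shows integrable_mean_opt_gap: "integrable (samples T) (\<lambda>w. mean_opt_gap w t)"
    and integral_mean_opt_gap: "(\<integral>w. mean_opt_gap w t \<partial>samples T) = sigma_sq"
proof -
  have "integrable (samples T) (\<lambda>w. opt_gap w t i)
      \<and> (\<integral>w. opt_gap w t i \<partial>samples T) = loc_obj F D i xstar - l i" if i: "i < n" for i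
  proof -
    interpret prob_space "D i" by (rule prob[OF i])
    have int: "integrable (D i) (\<lambda>\<xi>. F i xstar \<xi> - l i)" using int_F[OF i] by simp
    note sample = integral_sample[OF assms i borel_measurable_integrable[OF int]]
      integrable_sample[OF assms i borel_measurable_integrable[OF int] int]
    have "(\<integral>\<xi>. F i xstar \<xi> - l i \<partial>D i) = loc_obj F D i xstar - l i"
      using int_F[OF i] by (simp add: loc_obj_def prob_space)
    with sample show ?thesis
      by (simp add: opt_gap_def)
  qed
  then show "integrable (samples T) (\<lambda>w. mean_opt_gap w t)"
    and "(\<integral>w. mean_opt_gap w t \<partial>samples T) = sigma_sq"
    by (auto simp: mean_opt_gap_def sigma_sq_def Bochner_Integration.integral_sum
        intro!: Bochner_Integration.integrable_sum)
qed

lemma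
  fixes C :: real and a :: "nat \<Rightarrow> real"
  shows integrable_opt_gap_bound:
      "integrable (samples T) (\<lambda>w. C + (\<Sum>t<T. a t * mean_opt_gap w t))"
    and integral_opt_gap_bound:
      "(\<integral>w. C + (\<Sum>t<T. a t * mean_opt_gap w t) \<partial>samples T) = C + (\<Sum>t<T. a t) * sigma_sq"
proof -
  interpret prob_space "samples T" by (rule prob_space_samples)
  have sum_int: "integrable (samples T) (\<lambda>w. \<Sum>t<T. a t * mean_opt_gap w t)"
    by (intro Bochner_Integration.integrable_sum integrable_mult_right integrable_mean_opt_gap) simp
  then show "integrable (samples T) (\<lambda>w. C + (\<Sum>t<T. a t * mean_opt_gap w t))"
    by simp
  have "(\<integral>w. (\<Sum>t<T. a t * mean_opt_gap w t) \<partial>samples T) = (\<Sum>t<T. a t) * sigma_sq"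
    by (simp add: Bochner_Integration.integral_sum integrable_mean_opt_gap integral_mean_opt_gap
        sum_distrib_right)
  with sum_int show "(\<integral>w. C + (\<Sum>t<T. a t * mean_opt_gap w t) \<partial>samples T)
      = C + (\<Sum>t<T. a t) * sigma_sq"
    by (simp add: prob_space)
qed

lemma nn_integral_sample_gap:
  assumes t: "t < T" and i: "i < n"
  shows "(\<integral>\<^sup>+w. ennreal (sample_gap w t i) \<partial>samples T)
       = (\<integral>\<^sup>+w. ennreal (loc_obj F D i (iterate w t i) - l i) \<partial>samples T)"
proof -
  have "(\<integral>\<^sup>+w. ennreal (F i (iterate w t i) (w (t, i)) - l i) \<partial>samples T)
      = (\<integral>\<^sup>+w. (\<integral>\<^sup>+\<xi>. ennreal (F i (iterate w t i) \<xi> - l i) \<partial>D i) \<partial>samples T)"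
  proof -
    let ?I = "{..<T} \<times> {..<n}"
    have h: "(\<lambda>w. iterate w t i) \<in> measurable (PiM ?I (\<lambda>(t, i). D i)) borel"
      using measurable_iterate[of t T i] t i by (simp add: sample_space_def)
    have "(\<lambda>p. ennreal (case_prod (F i) p - l i)) \<in> borel_measurable (borel \<Otimes>\<^sub>M D i)"
      using meas_F[OF i]
      by (intro measurable_compose[OF _ measurable_ennreal] borel_measurable_diff) auto
    then have f: "(\<lambda>(x, \<xi>). ennreal (F i x \<xi> - l i))
        \<in> borel_measurable (borel \<Otimes>\<^sub>M (\<lambda>(t, i). D i) (t, i))"
      by (simp add: case_prod_beta')
    have upd: "iterate (w((t, i) := y)) t i = iterate w t i" for w y
      by (rule fun_cong[OF iterate_eq_if_samples_agree]) auto
    have "(t, i) \<in> ?I" "\<And>p. p \<in> ?I \<Longrightarrow> prob_space ((\<lambda>(t, i). D i) p)"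
      using t i prob by auto
    from nn_integral_PiM_independent_coordinate[OF _ this h f upd]
    show ?thesis by (simp add: sample_space_def)
  qed
  then show ?thesis
    by (simp add: sample_gap_def nn_integral_loc_gap(1)[OF i])
qed

lemma measurable_sample_gap:
  "t < T \<Longrightarrow> i < n \<Longrightarrow> (\<lambda>w. sample_gap w t i) \<in> borel_measurable (samples T)"
proof -
  assume t: "t < T" and i: "i < n"
  have "(\<lambda>w. (iterate w t i, w (t, i))) \<in> measurable (samples T) (borel \<Otimes>\<^sub>M D i)"
    using t i by (intro measurable_Pair measurable_sample measurable_iterate) auto
  from measurable_compose[OF this meas_F[OF i]] show ?thesis
    unfolding sample_gap_def by simp
qed

lemma
  assumes c: "2 * (real tau)\<^sup>2 \<le> c"
  shows integrable_sample_gap: "\<And>t i. t < T \<Longrightarrow> i < n \<Longrightarrow> integrable (samples T) (\<lambda>w. sample_gap w t i)"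
    and integral_sum_sample_gap_le:
      "alpha * (\<integral>w. (\<Sum>t<T. \<Sum>i<n. sample_gap w t i) \<partial>samples T)
        \<le> 2 * real n * ((norm (x0 - xstar))\<^sup>2 + 2 * gb * (real T * sigma_sq))"
proof -
  interpret prob_space "samples T" by (rule prob_space_samples)
  define H where "H w = 2 * real n / alpha * (norm (x0 - xstar))\<^sup>2
    + (\<Sum>t<T. 4 * gb * real n / alpha * mean_opt_gap w t)" for w
  have H_int: "integrable (samples T) H"
    unfolding H_def by (rule integrable_opt_gap_bound)
  have H_integral: "alpha * (\<integral>w. H w \<partial>samples T)
      = 2 * real n * ((norm (x0 - xstar))\<^sup>2 + 2 * gb * (real T * sigma_sq))"
    unfolding H_def integral_opt_gap_bound using alpha_pos by (simp add: field_simps)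
  have AE_bound: "AE w in samples T. (\<forall>t<T. \<forall>i<n. 0 \<le> sample_gap w t i)
      \<and> (\<Sum>t<T. \<Sum>i<n. sample_gap w t i) \<le> H w"
    using AE_regular_samples[of T]
  proof eventually_elim
    case (elim w)
    with sum_sample_gap_le[of T w, OF _ c] alpha_pos show ?case
      by (auto simp: H_def field_simps sum_distrib_left intro: regular_step_bounds(3))
  qed
  show int: "integrable (samples T) (\<lambda>w. sample_gap w t i)" if ti: "t < T" "i < n" for t i
  proof (rule Bochner_Integration.integrable_bound[OF H_int measurable_sample_gap[OF ti]])
    show "AE w in samples T. norm (sample_gap w t i) \<le> norm (H w)"
      using AE_bound
    proof eventually_elim
      case (elim w)
      then have "sample_gap w t i \<le> (\<Sum>i<n. sample_gap w t i)"
        using ti by (intro member_le_sum) auto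
      also have "\<dots> \<le> (\<Sum>t<T. \<Sum>i<n. sample_gap w t i)"
        using elim ti
        by (intro member_le_sum[of t "{..<T}" "\<lambda>t. \<Sum>i<n. sample_gap w t i"] sum_nonneg) auto
      finally have "sample_gap w t i \<le> H w" using elim by linarith
      moreover have "0 \<le> sample_gap w t i" using elim ti by blast
      ultimately show ?case by simp
    qed
  qed
  have "(\<integral>w. (\<Sum>t<T. \<Sum>i<n. sample_gap w t i) \<partial>samples T) \<le> (\<integral>w. H w \<partial>samples T)"
    using AE_bound
    by (intro integral_mono_AE H_int) (auto intro!: Bochner_Integration.integrable_sum int)
  then show "alpha * (\<integral>w. (\<Sum>t<T. \<Sum>i<n. sample_gap w t i) \<partial>samples T)
      \<le> 2 * real n * ((norm (x0 - xstar))\<^sup>2 + 2 * gb * (real T * sigma_sq))"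
    using alpha_pos H_integral by (metis mult_left_mono less_imp_le)
qed

(* The sampled gap is only known to be integrable through the pathwise bound, hence the hypothesis
   on c. *)
lemma integral_loc_obj_diff:
  assumes c: "2 * (real tau)\<^sup>2 \<le> c" and ti: "t < T" "i < n"
  shows "(\<integral>w. (loc_obj F D i (iterate w t i) - loc_obj F D i xstar) \<partial>samples T)
    = (\<integral>w. sample_gap w t i \<partial>samples T) - (loc_obj F D i xstar - l i)"
proof -
  interpret prob_space "samples T" by (rule prob_space_samples)
  have sample_nn: "AE w in samples T. 0 \<le> sample_gap w t i"
    using AE_regular_samples[of T]
    by eventually_elim (use ti in \<open>auto intro: regular_step_bounds(3)\<close>)
  have loc_meas: "(\<lambda>w. loc_obj F D i (iterate w t i) - l i) \<in> borel_measurable (samples T)"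
    using measurable_compose[OF measurable_iterate measurable_loc_obj] ti by simp
  have loc_nn: "AE w in samples T. 0 \<le> loc_obj F D i (iterate w t i) - l i"
    using nn_integral_loc_gap(2)[OF ti(2)] by simp
  note loc_gap = integral_eq_if_nn_integral_eq[OF integrable_sample_gap[OF c ti] sample_nn loc_meas
      loc_nn nn_integral_sample_gap[OF ti, symmetric]]
  have "(\<integral>w. (loc_obj F D i (iterate w t i) - loc_obj F D i xstar) \<partial>samples T)
      = (\<integral>w. (loc_obj F D i (iterate w t i) - l i) - (loc_obj F D i xstar - l i) \<partial>samples T)"
    by simp
  also have "\<dots> = (\<integral>w. loc_obj F D i (iterate w t i) - l i \<partial>samples T) - (loc_obj F D i xstar - l i)"
    by (simp only: Bochner_Integration.integral_diff[OF loc_gap(1) integrable_const]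
        lebesgue_integral_const prob_space) simp
  finally show ?thesis
    by (simp only: loc_gap(2))
qed

lemma convex_case:
  assumes c: "2 * (real tau)\<^sup>2 \<le> c" and T: "T \<ge> 1"
  shows "1 / (real T * real n)
      * (\<Sum>t<T. \<Sum>i<n. \<integral>w. (loc_obj F D i (iterate w t i) - loc_obj F D i xstar) \<partial>samples T)
    \<le> 2 / (real T * alpha) * (norm (x0 - xstar))\<^sup>2 + 4 * gb * sigma_sq / alpha"
proof -
  have "(\<Sum>t<T. \<Sum>i<n. \<integral>w. (loc_obj F D i (iterate w t i) - loc_obj F D i xstar) \<partial>samples T)
      = (\<Sum>t<T. \<Sum>i<n. \<integral>w. sample_gap w t i \<partial>samples T) - real T * (real n * sigma_sq)"
    using n_real_pos by (simp add: integral_loc_obj_diff[OF c] sum_subtractf sigma_sq_def)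
  also have "\<dots> \<le> (\<Sum>t<T. \<Sum>i<n. \<integral>w. sample_gap w t i \<partial>samples T)"
    using sigma_sq_nonneg by simp
  also have "\<dots> = (\<integral>w. (\<Sum>t<T. \<Sum>i<n. sample_gap w t i) \<partial>samples T)"
    by (subst Bochner_Integration.integral_sum)
       (auto intro!: sum.cong Bochner_Integration.integral_sum[symmetric]
         Bochner_Integration.integrable_sum integrable_sample_gap[OF c])
  also have "\<dots> \<le> 2 * real n / alpha * ((norm (x0 - xstar))\<^sup>2 + 2 * gb * (real T * sigma_sq))"
    using integral_sum_sample_gap_le[OF c, of T] alpha_pos by (simp add: field_simps)
  finally show ?thesis
    using T n_real_pos alpha_pos by (simp add: field_simps)
qed

lemma strong_convexity_rate_bounds:
  assumes mu: "mu > 0" and c: "4 * (real tau)\<^sup>2 \<le> c"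
  shows "0 < mu * alpha" "mu * alpha \<le> 1 / 2" "\<And>j. j \<le> tau \<Longrightarrow> 1 / 2 \<le> (1 - mu * alpha) ^ j"
proof -
  interpret prob_space "D 0" using prob n_pos by simp
  have "\<exists>\<xi>. regular 0 \<xi>"
  proof (rule ccontr)
    assume "\<nexists>\<xi>. regular 0 \<xi>"
    then have "AE \<xi> in D 0. False" using AE_regular[of 0] n_pos by simp
    then show False by (simp add: AE_False)
  qed
  then have "mu \<le> L" using mu_le_L by blast
  with mu have L: "L > 0" by simp
  show pos: "0 < mu * alpha" using mu alpha_pos by simp
  have "real tau * 1 \<le> real tau * real tau" using tau_pos by (intro mult_left_mono) auto
  then have tau_le_c: "real tau \<le> c / 4" using c by (simp add: power2_eq_square)
  have "mu * alpha \<le> L * (1 / (2 * c * L))"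
    using \<open>mu \<le> L\<close> alpha_pos mu L by (intro mult_mono) (auto simp: sps_min_step_def)
  also have "\<dots> = 1 / (2 * c)" using L by simp
  finally have "real tau * (mu * alpha) \<le> c / 4 * (1 / (2 * c))"
    using tau_le_c mu alpha_pos by (intro mult_mono) auto
  also have "\<dots> \<le> 1 / 2" using c_pos by simp
  finally have window: "real tau * (mu * alpha) \<le> 1 / 2" .
  moreover have "1 * (mu * alpha) \<le> real tau * (mu * alpha)"
    using tau_pos pos by (intro mult_right_mono) auto
  ultimately show small: "mu * alpha \<le> 1 / 2" by linarith
  fix j assume "j \<le> tau"
  have "1 / 2 \<le> 1 + real tau * (- (mu * alpha))" using window by simp
  also have "\<dots> \<le> (1 - mu * alpha) ^ tau"
    using Bernoulli_inequality[of "- (mu * alpha)" tau] small by simp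
  also have "\<dots> \<le> (1 - mu * alpha) ^ j"
    using \<open>j \<le> tau\<close> small pos by (intro power_decreasing) auto
  finally show "1 / 2 \<le> (1 - mu * alpha) ^ j" .
qed

lemma strongly_convex_case:
  assumes mu: "mu > 0" and c: "4 * (real tau)\<^sup>2 \<le> c"
  shows "(\<integral>w. (norm (mean_iterate w T - xstar))\<^sup>2 \<partial>samples T)
    \<le> 1 / (mu * alpha) * (1 - mu * alpha) ^ T * (norm (x0 - xstar))\<^sup>2
       + 2 * gb * sigma_sq / (alpha * mu)"
proof -
  define a where "a = mu * alpha"
  note rate = strong_convexity_rate_bounds[OF mu c, folded a_def]
  define H where "H w = (1 - a) ^ T * (norm (x0 - xstar))\<^sup>2
    + (\<Sum>t<T. 2 * gb * (1 - a) ^ (T - 1 - t) * mean_opt_gap w t)" for w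
  have AE_le: "AE w in samples T. dist_sq w T \<le> H w"
    using AE_regular_samples[of T]
  proof eventually_elim
    case (elim w)
    then show ?case
      using dist_sq_geometric_bound[of T w, OF _ c] rate by (auto simp: H_def a_def)
  qed
  then have "AE w in samples T. 0 \<le> H w"
    by eventually_elim (simp add: dist_sq_def order_trans[OF zero_le_power2])
  with AE_le have "(\<integral>w. dist_sq w T \<partial>samples T) \<le> (\<integral>w. H w \<partial>samples T)"
    unfolding H_def by (rule integral_mono_AE'[OF integrable_opt_gap_bound])
  also have "\<dots> = (1 - a) ^ T * (norm (x0 - xstar))\<^sup>2
      + (\<Sum>t<T. 2 * gb * (1 - a) ^ (T - 1 - t)) * sigma_sq"
    unfolding H_def by (rule integral_opt_gap_bound)
  also have "\<dots> \<le> 1 / a * (1 - a) ^ T * (norm (x0 - xstar))\<^sup>2 + 2 * gb * sigma_sq / a"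
  proof (rule add_mono)
    have "1 * ((1 - a) ^ T * (norm (x0 - xstar))\<^sup>2) \<le> 1 / a * ((1 - a) ^ T * (norm (x0 - xstar))\<^sup>2)"
      using rate by (intro mult_right_mono) (auto simp: field_simps)
    then show "(1 - a) ^ T * (norm (x0 - xstar))\<^sup>2 \<le> 1 / a * (1 - a) ^ T * (norm (x0 - xstar))\<^sup>2"
      by (simp add: mult.assoc)
    have "(\<Sum>t<T. 2 * gb * (1 - a) ^ (T - 1 - t)) = 2 * gb * (\<Sum>t<T. (1 - a) ^ (T - 1 - t))"
      by (simp add: sum_distrib_left)
    also have "\<dots> \<le> 2 * gb * (1 / a)"
      using sum_power_diff_le_inverse[of a T] rate gb_pos by (intro mult_left_mono) auto
    finally have "(\<Sum>t<T. 2 * gb * (1 - a) ^ (T - 1 - t)) * sigma_sq \<le> 2 * gb * (1 / a) * sigma_sq"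
      using sigma_sq_nonneg by (rule mult_right_mono)
    then show "(\<Sum>t<T. 2 * gb * (1 - a) ^ (T - 1 - t)) * sigma_sq \<le> 2 * gb * sigma_sq / a"
      by simp
  qed
  finally show ?thesis
    by (simp add: dist_sq_def a_def mult.commute)
qed

end

theorem theorem1:
  fixes n tau :: nat
    and D :: "nat \<Rightarrow> 'a measure"
    and F :: "nat \<Rightarrow> 'v::euclidean_space \<Rightarrow> 'a \<Rightarrow> real"
    and G :: "nat \<Rightarrow> 'v \<Rightarrow> 'a \<Rightarrow> 'v"
    and l :: "nat \<Rightarrow> real"
    and L mu c gb :: real
    and x0 xstar :: 'v
  assumes n_pos: "n \<ge> 1" and tau_pos: "tau \<ge> 1"
    and prob: "\<And>i. i < n \<Longrightarrow> prob_space (D i)"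
    and meas_F: "\<And>i. i < n \<Longrightarrow> (\<lambda>(x, \<xi>). F i x \<xi>) \<in> borel_measurable (borel \<Otimes>\<^sub>M D i)"
    and meas_G: "\<And>i. i < n \<Longrightarrow> (\<lambda>(x, \<xi>). G i x \<xi>) \<in> borel_measurable (borel \<Otimes>\<^sub>M D i)"
    and int_F: "\<And>i x. i < n \<Longrightarrow> integrable (D i) (F i x)"
    and int_G: "\<And>i x. i < n \<Longrightarrow> integrable (D i) (G i x)"
    and grad_F: "\<And>i. i < n \<Longrightarrow> AE \<xi> in D i. \<forall>x.
                    ((\<lambda>z. F i z \<xi>) has_derivative (\<lambda>h. G i x \<xi> \<bullet> h)) (at x)"
    and grad_f: "\<And>i x. i < n \<Longrightarrow>
                    (loc_obj F D i has_derivative (\<lambda>h. (\<integral>\<xi>. G i x \<xi> \<partial>D i) \<bullet> h)) (at x)"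
    and lower: "\<And>i. i < n \<Longrightarrow> AE \<xi> in D i. \<forall>x. l i \<le> F i x \<xi>"
    and L_nonneg: "L \<ge> 0"
    and smooth: "\<And>i. i < n \<Longrightarrow> AE \<xi> in D i. \<forall>x y.
                    norm (G i y \<xi> - G i x \<xi>) \<le> L * norm (x - y)"
    and mu_nonneg: "mu \<ge> 0"
    and convex: "\<And>i. i < n \<Longrightarrow> AE \<xi> in D i. \<forall>x y.
                    F i y \<xi> \<ge> F i x \<xi> + G i x \<xi> \<bullet> (y - x) + mu / 2 * (norm (y - x))\<^sup>2"
    and xstar_min: "\<And>y. glob_obj F D n xstar \<le> glob_obj F D n y"
    and c_pos: "c > 0" and gb_pos: "gb > 0"
  shows "(let alpha = (if L = 0 then gb else min (1 / (2 * c * L)) gb);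
              sigma2 = (\<Sum>i<n. loc_obj F D i xstar - l i) / real n;
              x = fedsps F G l c gb tau n x0;
              xbar = fedsps_avg F G l c gb tau n x0
          in (c \<ge> 2 * (real tau)\<^sup>2 \<longrightarrow>
               (\<forall>T\<ge>1. (1 / (real T * real n)) *
                   (\<Sum>t<T. \<Sum>i<n. \<integral>w. (loc_obj F D i (x w t i) - loc_obj F D i xstar)
                                         \<partial>sample_space D n T)
                 \<le> 2 / (real T * alpha) * (norm (x0 - xstar))\<^sup>2 + 4 * gb * sigma2 / alpha))
           \<and> (mu > 0 \<and> c \<ge> 4 * (real tau)\<^sup>2 \<longrightarrow>
               (\<forall>T\<ge>1. (\<integral>w. (norm (xbar w T - xstar))\<^sup>2 \<partial>sample_space D n T)
                 \<le> 1 / (mu * alpha) * (1 - mu * alpha) ^ T * (norm (x0 - xstar))\<^sup>2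
                    + 2 * gb * sigma2 / (alpha * mu))))"
proof -
  have path: "fedsps_path n tau L mu c gb"
    by unfold_locales (use assms in auto)
  interpret fedsps_path n tau F G l L mu c gb x0 xstar
    by (fact path)
  have "AE \<xi> in D i. regular i \<xi>" if i: "i < n" for i
    using grad_F[OF i] lower[OF i] smooth[OF i] convex[OF i]
    unfolding regular_def by eventually_elim auto
  with path interpret fedsps_sampling n tau F G l L mu c gb x0 xstar D
    by (intro fedsps_sampling.intro fedsps_sampling_axioms.intro prob meas_F meas_G int_F)
  show ?thesis
    unfolding Let_def sps_min_step_def[symmetric] sigma_sq_def[symmetric]
    by (blast intro: convex_case strongly_convex_case)
qed


end
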